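(* Let $S\subseteq\mathbb R^n$ be a finite set of points and $I=\mathcal I(S)$. Then $I$ is $\mathrm{TH}_1$-exact if and only if for each facet $F$ of the polytope $\operatorname{conv}(S)$ (facets taken relative to the affine hull of $S$) there exists a hyperplane $H$ of the affine hull of $S$ parallel to the affine hull of $F$ such that $S\subseteq F\cup H$; i.e. if and only if $\operatorname{conv}(S)$ is a $2$-level polytope with vertex set $S$.
   Context: For $S\subseteq\mathbb R^n$, $\mathcal I(S)$ is the ideal of all polynomials vanishing on $S$, and $\mathcal V_{\mathbb R}(I)$ is the real zero set of an ideal $I$. $\mathbb{R}[\mathbf x]_k$ denotes the polynomials of degree at most $k$. A polynomial $h$ is $k$-sos modulo $I$ if there are $g_1,\dots,g_r\in\mathbb{R}[\mathbf x]_k$ with $h-\sum_i g_i^2\in I$. The $k$-th theta body is $\mathrm{TH}_k(I)=\{p\in\mathbb R^n: l(p)\ge 0$ for every $l\in\mathbb{R}[\mathbf x]_1$ that is $k$-sos modulo $I\}$. $I$ is $\mathrm{TH}_k$-exact if $\mathrm{TH}_k(I)=\operatorname{cl}(\operatorname{conv}(\mathcal V_{\mathbb R}(I)))$. A polytope $P$ is $k$-level if for every facet $F$ of $P$ and the supporting hyperplane $H$ of $F$ there are $k-1$ hyperplanes $H_1,\dots,H_{k-1}$ parallel to $H$ such that all vertices of $P$ lie in $H\cup H_1\cup\dots\cup H_{k-1}$. *)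

theory Defs
  imports "HOL-Analysis.Analysis"
begin

text \<open>Real polynomials in the coordinates of real^'n, represented by their polynomial
  functions (faithful over the infinite field of reals).\<close>

definition monom_fun :: "('n::finite \<Rightarrow> nat) \<Rightarrow> real^'n \<Rightarrow> real" where
  "monom_fun \<alpha> = (\<lambda>x. \<Prod>i\<in>UNIV. (x $ i) ^ \<alpha> i)"

definition mdeg :: "('n::finite \<Rightarrow> nat) \<Rightarrow> nat" where
  "mdeg \<alpha> = (\<Sum>i\<in>UNIV. \<alpha> i)"

definition poly_deg_le :: "nat \<Rightarrow> (real^'n::finite \<Rightarrow> real) \<Rightarrow> bool" where
  "poly_deg_le k f \<longleftrightarrow> (\<exists>A c. finite A \<and> (\<forall>\<alpha>\<in>A. mdeg \<alpha> \<le> k) \<and>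
      f = (\<lambda>x. \<Sum>\<alpha>\<in>A. c \<alpha> * monom_fun \<alpha> x))"

definition is_poly :: "(real^'n::finite \<Rightarrow> real) \<Rightarrow> bool" where
  "is_poly f \<longleftrightarrow> (\<exists>k. poly_deg_le k f)"

definition vanishing_ideal :: "(real^'n::finite) set \<Rightarrow> (real^'n \<Rightarrow> real) set" where
  "vanishing_ideal S = {f. is_poly f \<and> (\<forall>x\<in>S. f x = 0)}"

definition real_zeros :: "(real^'n::finite \<Rightarrow> real) set \<Rightarrow> (real^'n) set" where
  "real_zeros I = {x. \<forall>f\<in>I. f x = 0}"

definition k_sos_mod :: "nat \<Rightarrow> (real^'n::finite \<Rightarrow> real) set \<Rightarrow> (real^'n \<Rightarrow> real) \<Rightarrow> bool" where
  "k_sos_mod k I h \<longleftrightarrow> (\<exists>gs. (\<forall>g\<in>set gs. poly_deg_le k g) \<and>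
      (\<lambda>x. h x - (\<Sum>g\<leftarrow>gs. (g x)^2)) \<in> I)"

definition theta_body :: "nat \<Rightarrow> (real^'n::finite \<Rightarrow> real) set \<Rightarrow> (real^'n) set" where
  "theta_body k I = {p. \<forall>l. poly_deg_le 1 l \<and> k_sos_mod k I l \<longrightarrow> l p \<ge> 0}"

definition TH_exact :: "nat \<Rightarrow> (real^'n::finite \<Rightarrow> real) set \<Rightarrow> bool" where
  "TH_exact k I \<longleftrightarrow> theta_body k I = closure (convex hull (real_zeros I))"

end

theory Submission
  imports Defs
begin

(* For a finite S, the zero set of I(S) is S itself and conv S is closed, so TH_1-exactness
   of I(S) means TH_1(I(S)) \<subseteq> conv S.  Linear polynomials that are 1-sos modulo I(S) are
   exactly the affine functions l with l = \<Sum> g_i^2 on S for affine g_i.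

   (\<Leftarrow>) If every facet is two-level, each facet inequality l \<ge> 0 takes only the values
   0 and \<kappa> on S, hence l = (l/\<surd>\<kappa>)^2 on S is 1-sos; since TH_1 also lies in the affine hull
   of S, TH_1 is contained in the facet description of conv S.
   (\<Rightarrow>) Fix a facet F = conv S \<inter> {a\<bullet>x = b} spanned by T \<subseteq> S and a point s0 \<in> S off F.
   Every s \<in> S is an affine combination of T \<union> {s0} with coefficient r(s) at s0.  The points
   (1+t) q - t s0 (q the centroid of T) leave conv S, so exactness yields certificates
   l = \<Sum> g_i^2 that are negative there; letting t \<rightarrow> 0 forces r(s)^2 = r(s), so r(s) \<in> {0,1},
   which places s either on F or on the translate of aff F through s0. *)

lemma poly_deg_le_reindex:
  fixes \<alpha> :: "'i \<Rightarrow> ('n::finite \<Rightarrow> nat)"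
  assumes "finite I" "\<forall>i\<in>I. mdeg (\<alpha> i) \<le> k"
  shows "poly_deg_le k (\<lambda>x::real^'n. \<Sum>i\<in>I. c i * monom_fun (\<alpha> i) x)"
proof -
  define d where "d \<beta> = (\<Sum>i\<in>{i\<in>I. \<alpha> i = \<beta>}. c i)" for \<beta>
  have "(\<lambda>x::real^'n. \<Sum>i\<in>I. c i * monom_fun (\<alpha> i) x) = (\<lambda>x. \<Sum>\<beta>\<in>\<alpha> ` I. d \<beta> * monom_fun \<beta> x)"
  proof
    fix x :: "real^'n"
    have "(\<Sum>i\<in>I. c i * monom_fun (\<alpha> i) x) =
          (\<Sum>\<beta>\<in>\<alpha> ` I. \<Sum>i\<in>{i\<in>I. \<alpha> i = \<beta>}. c i * monom_fun (\<alpha> i) x)"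
      using assms(1) by (rule sum.image_gen)
    also have "\<dots> = (\<Sum>\<beta>\<in>\<alpha> ` I. d \<beta> * monom_fun \<beta> x)"
      unfolding d_def sum_distrib_right by (intro sum.cong refl) auto
    finally show "(\<Sum>i\<in>I. c i * monom_fun (\<alpha> i) x) = (\<Sum>\<beta>\<in>\<alpha> ` I. d \<beta> * monom_fun \<beta> x)" .
  qed
  then show ?thesis unfolding poly_deg_le_def using assms by blast
qed

lemma poly_deg_le_const: "poly_deg_le k (\<lambda>x::real^'n::finite. c)"
proof -
  have "(\<lambda>x::real^'n. c) = (\<lambda>x. \<Sum>i\<in>{()}. c * monom_fun (\<lambda>j. 0) x)"
    by (simp add: monom_fun_def)
  moreover have "poly_deg_le k (\<lambda>x::real^'n. \<Sum>i\<in>{()}. c * monom_fun (\<lambda>j. 0) x)"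
    by (rule poly_deg_le_reindex) (auto simp: mdeg_def)
  ultimately show ?thesis by simp
qed

lemma poly_deg_le_add:
  assumes "poly_deg_le k f" "poly_deg_le k g"
  shows "poly_deg_le k (\<lambda>x. f x + g x)"
proof -
  obtain A c where A: "finite A" "\<forall>\<alpha>\<in>A. mdeg \<alpha> \<le> k" "f = (\<lambda>x. \<Sum>\<alpha>\<in>A. c \<alpha> * monom_fun \<alpha> x)"
    using assms(1) unfolding poly_deg_le_def by blast
  obtain B d where B: "finite B" "\<forall>\<alpha>\<in>B. mdeg \<alpha> \<le> k" "g = (\<lambda>x. \<Sum>\<alpha>\<in>B. d \<alpha> * monom_fun \<alpha> x)"
    using assms(2) unfolding poly_deg_le_def by blast
  have "poly_deg_le k (\<lambda>x. \<Sum>i\<in>A <+> B. case_sum c d i * monom_fun (case_sum id id i) x)"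
    by (rule poly_deg_le_reindex) (use A B in auto)
  moreover have "(\<lambda>x. \<Sum>i\<in>A <+> B. case_sum c d i * monom_fun (case_sum id id i) x) = (\<lambda>x. f x + g x)"
    using A B by (simp add: sum.Plus o_def)
  ultimately show ?thesis by simp
qed

lemma poly_deg_le_mult:
  assumes "poly_deg_le k f" "poly_deg_le m g"
  shows "poly_deg_le (k + m) (\<lambda>x. f x * g x)"
proof -
  obtain A c where A: "finite A" "\<forall>\<alpha>\<in>A. mdeg \<alpha> \<le> k" "f = (\<lambda>x. \<Sum>\<alpha>\<in>A. c \<alpha> * monom_fun \<alpha> x)"
    using assms(1) unfolding poly_deg_le_def by blast
  obtain B d where B: "finite B" "\<forall>\<alpha>\<in>B. mdeg \<alpha> \<le> m" "g = (\<lambda>x. \<Sum>\<alpha>\<in>B. d \<alpha> * monom_fun \<alpha> x)"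
    using assms(2) unfolding poly_deg_le_def by blast
  define mult_exp where "mult_exp p = (\<lambda>i. fst p i + snd p i)" for p :: "('a \<Rightarrow> nat) \<times> ('a \<Rightarrow> nat)"
  have deg: "mdeg (mult_exp (\<alpha>, \<beta>)) = mdeg \<alpha> + mdeg \<beta>" for \<alpha> \<beta>
    by (simp add: mult_exp_def mdeg_def sum.distrib)
  have monom: "monom_fun (mult_exp (\<alpha>, \<beta>)) x = monom_fun \<alpha> x * monom_fun \<beta> x" for \<alpha> \<beta> x
    by (simp add: mult_exp_def monom_fun_def power_add prod.distrib)
  have "poly_deg_le (k+m) (\<lambda>x. \<Sum>p\<in>A \<times> B. (c (fst p) * d (snd p)) * monom_fun (mult_exp p) x)"
    by (rule poly_deg_le_reindex) (use A B deg in \<open>auto intro: add_mono\<close>)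
  moreover have "(\<lambda>x. \<Sum>p\<in>A \<times> B. (c (fst p) * d (snd p)) * monom_fun (mult_exp p) x) = (\<lambda>x. f x * g x)"
  proof
    fix x
    show "(\<Sum>p\<in>A \<times> B. (c (fst p) * d (snd p)) * monom_fun (mult_exp p) x) = f x * g x"
      unfolding A(3) B(3) sum_product sum.cartesian_product
      by (intro sum.cong refl) (auto simp: monom algebra_simps)
  qed
  ultimately show ?thesis by simp
qed

lemma poly_deg_le_mono: "k \<le> m \<Longrightarrow> poly_deg_le k f \<Longrightarrow> poly_deg_le m f"
  unfolding poly_deg_le_def by (metis order_trans)

lemma poly_deg_le_scale: "poly_deg_le k f \<Longrightarrow> poly_deg_le k (\<lambda>x. c * f x)"
  using poly_deg_le_mult[OF poly_deg_le_const[of 0 c], of k f] by simp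

lemma poly_deg_le_affine: "poly_deg_le 1 (\<lambda>x::real^'n::finite. a \<bullet> x + b)"
proof -
  have "poly_deg_le 1 (\<lambda>x::real^'n. \<Sum>j\<in>UNIV. (a $ j) * monom_fun (\<lambda>i. if i = j then 1 else 0) x)"
    by (rule poly_deg_le_reindex) (auto simp: mdeg_def)
  moreover have "(\<lambda>x::real^'n. \<Sum>j\<in>UNIV. (a $ j) * monom_fun (\<lambda>i. if i = j then 1 else 0) x) =
                 (\<lambda>x. a \<bullet> x)"
    by (simp add: monom_fun_def inner_vec_def power_0 if_distrib prod.If_cases cong: if_cong)
  ultimately have "poly_deg_le 1 (\<lambda>x::real^'n. a \<bullet> x)" by simp
  from poly_deg_le_add[OF this poly_deg_le_const] show ?thesis .
qed

definition affine_fun :: "(real^'n::finite \<Rightarrow> real) \<Rightarrow> bool" where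
  "affine_fun f \<longleftrightarrow> (\<exists>a b. f = (\<lambda>x. a \<bullet> x + b))"

lemma monom_fun_affine:
  fixes \<alpha> :: "'n::finite \<Rightarrow> nat"
  assumes "mdeg \<alpha> \<le> 1"
  shows "affine_fun (monom_fun \<alpha>)"
proof (cases "\<forall>i. \<alpha> i = 0")
  case True
  then have "monom_fun \<alpha> = (\<lambda>x. 0 \<bullet> x + 1)" by (simp add: monom_fun_def)
  then show ?thesis unfolding affine_fun_def by blast
next
  case False
  then obtain j where j: "\<alpha> j \<noteq> 0" by blast
  have "mdeg \<alpha> = \<alpha> j + (\<Sum>i\<in>UNIV - {j}. \<alpha> i)"
    unfolding mdeg_def by (simp add: sum.remove)
  with assms j have aj: "\<alpha> j = 1" and rest: "(\<Sum>i\<in>UNIV - {j}. \<alpha> i) = 0" by linarith+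
  then have rest0: "\<forall>i\<in>UNIV - {j}. \<alpha> i = 0" by simp
  have "monom_fun \<alpha> x = x $ j" for x :: "real^'n"
  proof -
    have "monom_fun \<alpha> x = (x $ j) ^ \<alpha> j * (\<Prod>i\<in>UNIV - {j}. (x $ i) ^ \<alpha> i)"
      unfolding monom_fun_def by (simp add: prod.remove)
    then show ?thesis using aj rest0 by simp
  qed
  then have "monom_fun \<alpha> = (\<lambda>x. axis j 1 \<bullet> x + 0)" by (auto simp: inner_axis')
  then show ?thesis unfolding affine_fun_def by blast
qed

lemma affine_fun_lincomb:
  fixes f :: "'b \<Rightarrow> real^'n::finite \<Rightarrow> real"
  shows "finite A \<Longrightarrow> \<forall>\<alpha>\<in>A. affine_fun (f \<alpha>) \<Longrightarrow> affine_fun (\<lambda>x. \<Sum>\<alpha>\<in>A. c \<alpha> * f \<alpha> x)"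
proof (induction A rule: finite_induct)
  case empty
  have "(\<lambda>x::real^'n. \<Sum>\<alpha>\<in>{}. c \<alpha> * f \<alpha> x) = (\<lambda>x. 0 \<bullet> x + 0)" by simp
  then show ?case unfolding affine_fun_def by blast
next
  case (insert a A)
  then obtain u v where uv: "(\<lambda>x. \<Sum>\<alpha>\<in>A. c \<alpha> * f \<alpha> x) = (\<lambda>x. u \<bullet> x + v)"
    unfolding affine_fun_def by blast
  obtain p w where pw: "f a = (\<lambda>x. p \<bullet> x + w)" using insert unfolding affine_fun_def by blast
  have "(\<lambda>x. \<Sum>\<alpha>\<in>insert a A. c \<alpha> * f \<alpha> x) = (\<lambda>x. (c a *\<^sub>R p + u) \<bullet> x + (c a * w + v))"
  proof
    fix x
    have "(\<Sum>\<alpha>\<in>A. c \<alpha> * f \<alpha> x) = u \<bullet> x + v" using uv by metis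
    then show "(\<Sum>\<alpha>\<in>insert a A. c \<alpha> * f \<alpha> x) = (c a *\<^sub>R p + u) \<bullet> x + (c a * w + v)"
      using insert pw by (simp add: inner_add_left algebra_simps)
  qed
  then show ?case unfolding affine_fun_def by blast
qed

lemma poly_deg_le_1_imp_affine_fun: "poly_deg_le 1 f \<Longrightarrow> affine_fun f"
  unfolding poly_deg_le_def using affine_fun_lincomb monom_fun_affine by metis

lemma affine_fun_affine_comb:
  assumes "affine_fun h" "finite A" "sum \<mu> A = 1"
  shows "h (\<Sum>v\<in>A. \<mu> v *\<^sub>R v) = (\<Sum>v\<in>A. \<mu> v * h v)"
proof -
  obtain a b where h: "h = (\<lambda>x. a \<bullet> x + b)" using assms(1) unfolding affine_fun_def by blast
  have "(\<Sum>v\<in>A. \<mu> v * h v) = (\<Sum>v\<in>A. \<mu> v * (a \<bullet> v)) + (\<Sum>v\<in>A. \<mu> v) * b"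
    by (simp add: h algebra_simps sum.distrib sum_distrib_left)
  then show ?thesis using assms(3) by (simp add: h inner_sum_right)
qed

lemma is_poly_const: "is_poly (\<lambda>x::real^'n::finite. c)"
  unfolding is_poly_def using poly_deg_le_const by blast

lemma is_poly_add: "is_poly f \<Longrightarrow> is_poly g \<Longrightarrow> is_poly (\<lambda>x. f x + g x)"
  unfolding is_poly_def by (metis poly_deg_le_add poly_deg_le_mono max.cobounded1 max.cobounded2)

lemma is_poly_mult: "is_poly f \<Longrightarrow> is_poly g \<Longrightarrow> is_poly (\<lambda>x. f x * g x)"
  unfolding is_poly_def by (metis poly_deg_le_mult)

lemma is_poly_diff: "is_poly f \<Longrightarrow> is_poly g \<Longrightarrow> is_poly (\<lambda>x. f x - g x)"
  using is_poly_add[of f "\<lambda>x. (-1) * g x"] is_poly_mult[OF is_poly_const, of g "-1"] by simp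

lemma is_poly_affine: "is_poly (\<lambda>x::real^'n::finite. a \<bullet> x + b)"
  unfolding is_poly_def using poly_deg_le_affine by blast

lemma is_poly_prod: "finite A \<Longrightarrow> \<forall>a\<in>A. is_poly (f a) \<Longrightarrow> is_poly (\<lambda>x. \<Prod>a\<in>A. f a x)"
  by (induction A rule: finite_induct) (auto intro: is_poly_mult is_poly_const)

lemma is_poly_sum: "finite A \<Longrightarrow> \<forall>a\<in>A. is_poly (f a) \<Longrightarrow> is_poly (\<lambda>x. \<Sum>a\<in>A. f a x)"
  by (induction A rule: finite_induct) (auto intro: is_poly_add is_poly_const)

(* A finite set is the real zero set of its vanishing ideal: z \<notin> S is detected by
   the polynomial \<Prod>_{s\<in>S} |x - s|^2. *)
lemma real_zeros_vanishing_ideal: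
  fixes S :: "(real^'n::finite) set"
  assumes "finite S"
  shows "real_zeros (vanishing_ideal S) = S"
proof
  show "S \<subseteq> real_zeros (vanishing_ideal S)"
    unfolding real_zeros_def vanishing_ideal_def by auto
next
  show "real_zeros (vanishing_ideal S) \<subseteq> S"
  proof
    fix z assume z: "z \<in> real_zeros (vanishing_ideal S)"
    define f where "f = (\<lambda>x::real^'n. \<Prod>s\<in>S. (\<Sum>i\<in>UNIV. (x $ i - s $ i) * (x $ i - s $ i)))"
    have coord: "is_poly (\<lambda>x::real^'n. x $ i - s $ i)" for i s
      using is_poly_affine[of "axis i 1" "- s $ i"] by (simp add: inner_axis')
    have "is_poly f" unfolding f_def
      by (intro is_poly_prod is_poly_sum assms ballI is_poly_mult coord) auto
    moreover have "\<forall>x\<in>S. f x = 0" unfolding f_def using assms by (auto intro!: bexI)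
    ultimately have "f \<in> vanishing_ideal S" unfolding vanishing_ideal_def by auto
    with z have "f z = 0" unfolding real_zeros_def by auto
    then obtain s where s: "s \<in> S" "(\<Sum>i\<in>UNIV. (z $ i - s $ i) * (z $ i - s $ i)) = 0"
      unfolding f_def using assms by auto
    then have "\<forall>i. z $ i - s $ i = 0"
      by (subst (asm) sum_nonneg_eq_0_iff) auto
    then have "z = s" by (simp add: vec_eq_iff)
    with s show "z \<in> S" by simp
  qed
qed

lemma sos_mod_vanishing_ideal_nonneg:
  assumes "k_sos_mod k (vanishing_ideal S) l" "s \<in> S"
  shows "l s \<ge> 0"
proof -
  obtain gs where "(\<lambda>x. l x - (\<Sum>g\<leftarrow>gs. (g x)^2)) \<in> vanishing_ideal S"
    using assms(1) unfolding k_sos_mod_def by blast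
  then have "l s = (\<Sum>g\<leftarrow>gs. (g s)^2)" using assms(2) unfolding vanishing_ideal_def by auto
  also have "\<dots> \<ge> 0" by (induction gs) auto
  finally show ?thesis .
qed

lemma convex_hull_subset_theta_body:
  fixes S :: "(real^'n::finite) set"
  shows "convex hull S \<subseteq> theta_body k (vanishing_ideal S)"
proof
  fix p assume p: "p \<in> convex hull S"
  show "p \<in> theta_body k (vanishing_ideal S)"
    unfolding theta_body_def
  proof (intro CollectI allI impI, elim conjE)
    fix l assume l1: "poly_deg_le 1 l" and l_sos: "k_sos_mod k (vanishing_ideal S) l"
    obtain a b where ab: "l = (\<lambda>x. a \<bullet> x + b)"
      using poly_deg_le_1_imp_affine_fun[OF l1] unfolding affine_fun_def by blast
    have "{x. a \<bullet> x + b \<ge> 0} = {x. (-a) \<bullet> x \<le> b}" by (auto simp: inner_minus_left)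
    then have "convex {x. a \<bullet> x + b \<ge> 0}" using convex_halfspace_le by metis
    moreover have "S \<subseteq> {x. a \<bullet> x + b \<ge> 0}"
      using sos_mod_vanishing_ideal_nonneg[OF l_sos] ab by auto
    ultimately have "convex hull S \<subseteq> {x. a \<bullet> x + b \<ge> 0}" by (intro hull_minimal)
    with p show "0 \<le> l p" using ab by auto
  qed
qed

lemma TH_exact_iff_subset:
  fixes S :: "(real^'n::finite) set"
  assumes "finite S"
  shows "TH_exact 1 (vanishing_ideal S) \<longleftrightarrow> theta_body 1 (vanishing_ideal S) \<subseteq> convex hull S"
proof -
  have "closure (convex hull S) = convex hull S"
    using assms by (simp add: compact_imp_closed finite_imp_compact_convex_hull)
  then show ?thesis unfolding TH_exact_def real_zeros_vanishing_ideal[OF assms]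
    using convex_hull_subset_theta_body[of S 1] by auto
qed

(* Two sources of sos certificates: polynomials vanishing on S (the empty sum), and
   nonnegative affine functions taking only the values 0 and \<kappa> on S, which agree on S
   with the square of l/\<surd>\<kappa>. *)
lemma vanishing_imp_sos_mod:
  assumes "is_poly l" "\<forall>s\<in>S. l s = 0"
  shows "k_sos_mod k (vanishing_ideal S) l"
  unfolding k_sos_mod_def vanishing_ideal_def
  by (rule exI[of _ "[]"]) (use assms in auto)

lemma two_valued_affine_sos_mod:
  fixes S :: "(real^'n::finite) set"
  assumes two: "\<forall>s\<in>S. a \<bullet> s + b = 0 \<or> a \<bullet> s + b = \<kappa>" and nonneg: "\<forall>s\<in>S. a \<bullet> s + b \<ge> 0"
  shows "k_sos_mod 1 (vanishing_ideal S) (\<lambda>x. a \<bullet> x + b)"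
proof (cases "\<kappa> > 0")
  case True
  define g where "g = (\<lambda>x::real^'n. (1 / sqrt \<kappa>) * (a \<bullet> x + b))"
  have g1: "poly_deg_le 1 g" unfolding g_def by (intro poly_deg_le_scale poly_deg_le_affine)
  then have "is_poly g" unfolding is_poly_def by blast
  then have "is_poly (\<lambda>x. a \<bullet> x + b - (\<Sum>h\<leftarrow>[g]. (h x)^2))"
    by (simp add: power2_eq_square) (intro is_poly_diff is_poly_affine is_poly_mult)
  moreover have "a \<bullet> s + b - (\<Sum>h\<leftarrow>[g]. (h s)^2) = 0" if "s \<in> S" for s
    using two that True by (auto simp: g_def power_mult_distrib power_divide power2_eq_square)
  ultimately have "(\<lambda>x. a \<bullet> x + b - (\<Sum>h\<leftarrow>[g]. (h x)^2)) \<in> vanishing_ideal S"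
    unfolding vanishing_ideal_def by blast
  then show ?thesis unfolding k_sos_mod_def using g1 by (intro exI[of _ "[g]"]) auto
next
  case False
  then have "\<forall>s\<in>S. a \<bullet> s + b = 0" using two nonneg by force
  then show ?thesis by (intro vanishing_imp_sos_mod is_poly_affine)
qed

lemma inner_const_on_affine_if_bounded_below:
  assumes "affine A" "x \<in> A" "y \<in> A" "\<forall>z\<in>A. c < a \<bullet> z"
  shows "a \<bullet> x = a \<bullet> y"
proof (rule ccontr)
  assume ne: "a \<bullet> x \<noteq> a \<bullet> y"
  define t where "t = (c - a \<bullet> y - 1) / (a \<bullet> x - a \<bullet> y)"
  have "y + t *\<^sub>R (x - y) \<in> A"
    by (rule mem_affine_3_minus[OF assms(1) assms(3,2,3)])
  moreover have "a \<bullet> (y + t *\<^sub>R (x - y)) = a \<bullet> y + t * (a \<bullet> x - a \<bullet> y)"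
    by (simp add: inner_add_right inner_diff_right right_diff_distrib)
  moreover have "t * (a \<bullet> x - a \<bullet> y) = c - a \<bullet> y - 1"
    using ne by (simp add: t_def)
  ultimately have "c < c - 1" using assms(4) by fastforce
  then show False by simp
qed

(* TH_1(I(S)) lies in the affine hull of S: a point outside is separated from aff S by a
   functional that is constant on aff S, giving an affine function vanishing on S.
   (For S = {} the constant -1 vanishes on S and excludes every point.) *)
lemma theta_body_subset_affine_hull:
  fixes S :: "(real^'n::finite) set"
  shows "theta_body 1 (vanishing_ideal S) \<subseteq> affine hull S"
proof
  fix p assume p: "p \<in> theta_body 1 (vanishing_ideal S)"
  have certified: "0 \<le> a \<bullet> p + b" if "\<forall>s\<in>S. a \<bullet> s + b = 0" for a b
  proof -
    have "k_sos_mod 1 (vanishing_ideal S) (\<lambda>x. a \<bullet> x + b)"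
      using that by (intro vanishing_imp_sos_mod is_poly_affine)
    then show ?thesis using p poly_deg_le_affine unfolding theta_body_def by blast
  qed
  show "p \<in> affine hull S"
  proof (rule ccontr)
    assume np: "p \<notin> affine hull S"
    show False
    proof (cases "S = {}")
      case True
      then show False using certified[of 0 "-1"] by simp
    next
      case False
      then obtain s0 where s0: "s0 \<in> affine hull S" by (meson hull_inc all_not_in_conv)
      obtain a c where ac: "a \<bullet> p < c" "\<forall>x\<in>affine hull S. c < a \<bullet> x"
        using separating_hyperplane_closed_point[OF convex_affine_hull closed_affine_hull np]
        by blast
      have "\<forall>s\<in>S. a \<bullet> s + - (a \<bullet> s0) = 0"
        using inner_const_on_affine_if_bounded_below[OF affine_affine_hull _ s0 ac(2)]
        by (simp add: hull_inc)
      from certified[OF this] have "a \<bullet> s0 \<le> a \<bullet> p" by simp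
      then show False using ac s0 by force
    qed
  qed
qed

(* For a two-level facet C = conv S \<inter> {a\<bullet>x = b} the facet inequality
   b - a\<bullet>x \<ge> 0 takes the values 0 (on C) and -(a\<bullet>v) (on the translate v + aff C). *)
lemma two_level_facet_sos_mod:
  fixes S :: "(real^'n::finite) set"
  assumes valid: "convex hull S \<subseteq> {x. a \<bullet> x \<le> b}"
    and C: "C = convex hull S \<inter> {x. a \<bullet> x = b}"
    and two_level: "S \<subseteq> C \<union> (\<lambda>x. v + x) ` (affine hull C)"
  shows "k_sos_mod 1 (vanishing_ideal S) (\<lambda>x. (- a) \<bullet> x + b)"
proof (rule two_valued_affine_sos_mod)
  have hyp: "affine hull C \<subseteq> {x. a \<bullet> x = b}"
    by (rule hull_minimal) (auto simp: C affine_hyperplane)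
  show "\<forall>s\<in>S. (- a) \<bullet> s + b = 0 \<or> (- a) \<bullet> s + b = - (a \<bullet> v)"
  proof
    fix s assume s: "s \<in> S"
    show "(- a) \<bullet> s + b = 0 \<or> (- a) \<bullet> s + b = - (a \<bullet> v)"
    proof (cases "s \<in> C")
      case True then show ?thesis unfolding C by (auto simp: inner_minus_left)
    next
      case False
      with s two_level obtain y where "y \<in> affine hull C" "s = v + y" by blast
      with hyp show ?thesis by (auto simp: inner_add_right inner_minus_left)
    qed
  qed
  show "\<forall>s\<in>S. (- a) \<bullet> s + b \<ge> 0"
    using valid hull_inc[of _ S convex] by (fastforce simp: inner_minus_left)
qed

(* If all facets are two-level, TH_1(I(S)) \<subseteq> conv S: write the polytope as its affine
   hull cut by facet-defining halfspaces; each halfspace is certified by the previous lemma. *)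
lemma two_level_imp_theta_body_subset:
  fixes S :: "(real^'n::finite) set"
  assumes fin: "finite S"
    and two_level: "\<forall>F. F facet_of (convex hull S) \<longrightarrow>
       (\<exists>H. (\<exists>v. H = (\<lambda>x. v + x) ` (affine hull F)) \<and> H \<subseteq> affine hull S \<and> S \<subseteq> F \<union> H)"
  shows "theta_body 1 (vanishing_ideal S) \<subseteq> convex hull S"
proof
  fix p assume p: "p \<in> theta_body 1 (vanishing_ideal S)"
  define P where "P = convex hull S"
  have "polyhedron P" unfolding P_def using fin by (rule polyhedron_convex_hull)
  then obtain \<F> where "finite \<F>" and P: "P = affine hull P \<inter> \<Inter>\<F>"
             and faces: "\<And>h. h \<in> \<F> \<Longrightarrow> \<exists>a b. a \<noteq> 0 \<and> h = {x. a \<bullet> x \<le> b}"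
             and min: "\<And>\<F>'. \<F>' \<subset> \<F> \<Longrightarrow> P \<subset> (affine hull P) \<inter> \<Inter>\<F>'"
    by (simp add: polyhedron_Int_affine_minimal) meson
  then obtain a b where ab: "\<And>h. h \<in> \<F> \<Longrightarrow> a h \<noteq> 0 \<and> h = {x. a h \<bullet> x \<le> b h}"
    by metis
  have "p \<in> h" if h: "h \<in> \<F>" for h
  proof -
    define C where "C = P \<inter> {x. a h \<bullet> x = b h}"
    have "C facet_of P" unfolding C_def
      using facet_of_polyhedron_explicit[OF \<open>finite \<F>\<close> P ab min] h by blast
    then obtain v where "S \<subseteq> C \<union> (\<lambda>x. v + x) ` (affine hull C)"
      using two_level unfolding P_def by blast
    moreover have "P \<subseteq> {x. a h \<bullet> x \<le> b h}" using h ab P by blast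
    ultimately have "k_sos_mod 1 (vanishing_ideal S) (\<lambda>x. (- a h) \<bullet> x + b h)"
      using two_level_facet_sos_mod C_def unfolding P_def by blast
    then have "0 \<le> (- a h) \<bullet> p + b h"
      using p poly_deg_le_affine unfolding theta_body_def by blast
    then have "a h \<bullet> p \<le> b h" by (simp add: inner_minus_left)
    with ab[OF h] show "p \<in> h" by blast
  qed
  moreover have "p \<in> affine hull P"
    using theta_body_subset_affine_hull p unfolding P_def affine_hull_convex_hull by blast
  ultimately show "p \<in> convex hull S" using P unfolding P_def by blast
qed


(* A real r that is approximated to order t by X \<ge> 0
   while |r| is approximated to order \<surd>t by \<surd>X satisfies r^2 = r: both r and r^2 are
   limits of X. *)
lemma nonneg_le_linear_imp_zero:
  fixes z A :: real
  assumes "z \<ge> 0" "\<forall>e. 0 < e \<and> e \<le> 1 \<longrightarrow> z \<le> A * e"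
  shows "z = 0"
proof (rule ccontr)
  assume "z \<noteq> 0"
  with assms have z: "z > 0" by simp
  have A: "A > 0" using assms(2)[rule_format, of 1] z by simp
  define e where "e = min 1 (z / (2 * A))"
  have e: "0 < e" "e \<le> 1" using z A by (auto simp: e_def)
  have "A * e \<le> A * (z / (2 * A))" using A by (intro mult_left_mono) (auto simp: e_def)
  also have "\<dots> = z / 2" using A by simp
  finally show False using assms(2) e z by force
qed

lemma idempotent_if_approximated:
  fixes r K K2 :: real
  assumes K: "K \<ge> 0" "K2 \<ge> 0"
    and approx: "\<forall>t. 0 < t \<and> t \<le> 1 \<longrightarrow>
                   (\<exists>X\<ge>0. \<bar>X - r\<bar> \<le> K * t \<and> \<bar>sqrt X - \<bar>r\<bar>\<bar> \<le> K2 * sqrt t)"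
  shows "r * r = r"
proof -
  define A where "A = K + K2 * (2 * \<bar>r\<bar> + K2)"
  have "\<bar>r * r - r\<bar> \<le> A * e" if e: "0 < e" "e \<le> 1" for e
  proof -
    have t: "0 < e*e" "e*e \<le> 1" using e by (auto simp: mult_le_one)
    obtain X where X: "X \<ge> 0" "\<bar>X - r\<bar> \<le> K * (e*e)" "\<bar>sqrt X - \<bar>r\<bar>\<bar> \<le> K2 * sqrt (e*e)"
      using approx t by blast
    let ?y = "sqrt X"
    have Xy: "X = ?y * ?y" using X(1) by (simp add: real_sqrt_mult[symmetric])
    have y0: "?y \<ge> 0" using X(1) by simp
    have d: "\<bar>?y - \<bar>r\<bar>\<bar> \<le> K2 * e" using X(3) e by simp
    have "r * r - X = (\<bar>r\<bar> - ?y) * (\<bar>r\<bar> + ?y)"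
      by (subst Xy) (simp add: algebra_simps abs_mult_self_eq)
    then have "\<bar>r * r - X\<bar> = \<bar>\<bar>r\<bar> - ?y\<bar> * (\<bar>r\<bar> + ?y)"
      using y0 by (simp add: abs_mult)
    also have "\<dots> \<le> (K2 * e) * (2 * \<bar>r\<bar> + K2 * e)"
      using d y0 K e by (intro mult_mono) (auto simp: abs_le_iff)
    also have "\<dots> \<le> (K2 * e) * (2 * \<bar>r\<bar> + K2)"
      using K e by (intro mult_left_mono add_left_mono) (auto simp: mult_left_le)
    finally have sq: "\<bar>r * r - X\<bar> \<le> K2 * (2 * \<bar>r\<bar> + K2) * e" by (simp add: algebra_simps)
    have "K * (e * e) \<le> K * e" using K e by (intro mult_left_mono) (auto simp: mult_le_cancel_left1)
    with X(2) have lin: "\<bar>X - r\<bar> \<le> K * e" by linarith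
    have "\<bar>r * r - r\<bar> \<le> \<bar>r * r - X\<bar> + \<bar>X - r\<bar>" by linarith
    also have "\<dots> \<le> A * e" using sq lin by (simp add: A_def algebra_simps)
    finally show ?thesis .
  qed
  then have "\<bar>r * r - r\<bar> = 0" by (intro nonneg_le_linear_imp_zero) auto
  then show ?thesis by simp
qed

lemma L2_set_scale: "L2_set (\<lambda>i. c * h i) I = \<bar>c\<bar> * L2_set h I"
  unfolding L2_set_def by (simp add: power_mult_distrib real_sqrt_mult flip: sum_distrib_left)

lemma L2_set_lincomb_le:
  assumes "finite J"
  shows "L2_set (\<lambda>i. \<Sum>j\<in>J. c j * u j i) I \<le> (\<Sum>j\<in>J. \<bar>c j\<bar> * L2_set (u j) I)"
  using assms
proof (induction J rule: finite_induct)
  case empty then show ?case by (simp add: L2_set_def)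
next
  case (insert j J)
  have "L2_set (\<lambda>i. \<Sum>j\<in>insert j J. c j * u j i) I =
        L2_set (\<lambda>i. c j * u j i + (\<Sum>j\<in>J. c j * u j i)) I"
    using insert by simp
  also have "\<dots> \<le> L2_set (\<lambda>i. c j * u j i) I + L2_set (\<lambda>i. \<Sum>j\<in>J. c j * u j i) I"
    by (rule L2_set_triangle_ineq)
  also have "\<dots> \<le> \<bar>c j\<bar> * L2_set (u j) I + (\<Sum>j\<in>J. \<bar>c j\<bar> * L2_set (u j) I)"
    using insert by (simp add: L2_set_scale)
  finally show ?case using insert by simp
qed

lemma L2_set_affine_comb_estimate:
  fixes G :: "nat \<Rightarrow> real^'n::finite \<Rightarrow> real"
  assumes G: "\<forall>i<n. affine_fun (G i)" and T: "finite T" "s0 \<notin> T"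
    and \<mu>: "sum \<mu> (insert s0 T) = 1" "(\<Sum>v\<in>insert s0 T. \<mu> v *\<^sub>R v) = s"
  shows "\<bar>L2_set (\<lambda>i. G i s) {..<n} - \<bar>\<mu> s0\<bar> * L2_set (\<lambda>i. G i s0) {..<n}\<bar>
           \<le> (\<Sum>f\<in>T. \<bar>\<mu> f\<bar> * L2_set (\<lambda>i. G i f) {..<n})"
proof -
  define N where "N v = L2_set (\<lambda>i. G i v) {..<n}" for v
  define E where "E = (\<Sum>f\<in>T. \<bar>\<mu> f\<bar> * N f)"
  have Gs: "G i s = \<mu> s0 * G i s0 + (\<Sum>f\<in>T. \<mu> f * G i f)" if "i < n" for i
    using affine_fun_affine_comb[OF G[rule_format, OF that] finite.insertI[OF T(1)] \<mu>(1)] \<mu>(2) T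
    by simp
  have rest: "L2_set (\<lambda>i. \<Sum>f\<in>T. c f * G i f) {..<n} \<le> (\<Sum>f\<in>T. \<bar>c f\<bar> * N f)" for c
    unfolding N_def by (rule L2_set_lincomb_le[OF T(1)])
  have "N s = L2_set (\<lambda>i. \<mu> s0 * G i s0 + (\<Sum>f\<in>T. \<mu> f * G i f)) {..<n}"
    unfolding N_def by (intro L2_set_cong) (auto simp: Gs)
  also have "\<dots> \<le> L2_set (\<lambda>i. \<mu> s0 * G i s0) {..<n} + L2_set (\<lambda>i. \<Sum>f\<in>T. \<mu> f * G i f) {..<n}"
    by (rule L2_set_triangle_ineq)
  also have "\<dots> \<le> \<bar>\<mu> s0\<bar> * N s0 + E"
    using rest[of \<mu>] unfolding E_def N_def L2_set_scale by simp
  finally have upper: "N s \<le> \<bar>\<mu> s0\<bar> * N s0 + E" .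
  have "\<bar>\<mu> s0\<bar> * N s0 = L2_set (\<lambda>i. G i s + (\<Sum>f\<in>T. (- \<mu> f) * G i f)) {..<n}"
    unfolding N_def L2_set_scale[symmetric] by (intro L2_set_cong) (auto simp: Gs sum_negf)
  also have "\<dots> \<le> L2_set (\<lambda>i. G i s) {..<n} + L2_set (\<lambda>i. \<Sum>f\<in>T. (- \<mu> f) * G i f) {..<n}"
    by (rule L2_set_triangle_ineq)
  also have "\<dots> \<le> N s + E"
    using rest[of "\<lambda>f. - \<mu> f"] unfolding E_def N_def by simp
  finally have lower: "\<bar>\<mu> s0\<bar> * N s0 \<le> N s + E" .
  from upper lower show ?thesis unfolding N_def E_def by linarith
qed

lemma affine_negative_beyond_centroid:
  fixes l :: "real^'n::finite \<Rightarrow> real"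
  assumes l: "affine_fun l" and T: "finite T" "T \<noteq> {}" and nonneg: "\<forall>f\<in>T. 0 \<le> l f"
    and q: "q = (\<Sum>f\<in>T. (1 / real (card T)) *\<^sub>R f)" and t: "0 < t"
    and neg: "l ((1+t) *\<^sub>R q - t *\<^sub>R s0) < 0"
  shows "0 < l s0" and "\<forall>f\<in>T. l f \<le> real (card T) * t * l s0"
proof -
  define m where "m = real (card T)"
  have m0: "m > 0" using T by (simp add: m_def card_gt_0_iff)
  have "l ((1+t) *\<^sub>R q - t *\<^sub>R s0) = (1+t) * l q - t * l s0"
    using l unfolding affine_fun_def by (auto simp: inner_diff_right algebra_simps)
  with neg have beyond: "(1+t) * l q < t * l s0" by simp
  have "l q = (\<Sum>f\<in>T. (1 / m) * l f)"
    unfolding q m_def[symmetric] using affine_fun_affine_comb[OF l T(1), of "\<lambda>_. 1 / m"] m0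
    by (simp add: m_def)
  then have lq: "(\<Sum>f\<in>T. l f) = m * l q" and lq0: "l q \<ge> 0"
    using m0 nonneg by (simp_all add: sum_distrib_left sum_nonneg)
  have "0 \<le> (1+t) * l q" using lq0 t by simp
  with beyond have "0 < t * l s0" by linarith
  then show "0 < l s0" using t by (simp add: zero_less_mult_iff)
  show "\<forall>f\<in>T. l f \<le> m * t * l s0"
  proof
    fix f assume "f \<in> T"
    then have "l f \<le> (\<Sum>f\<in>T. l f)" using T nonneg by (intro member_le_sum) auto
    also have "\<dots> = m * l q" by (rule lq)
    also have "\<dots> \<le> m * ((1+t) * l q)"
      using m0 lq0 t by (intro mult_left_mono) (auto simp: algebra_simps)
    also have "\<dots> \<le> m * (t * l s0)" using m0 beyond by (intro mult_left_mono) auto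
    finally show "l f \<le> m * t * l s0" by simp
  qed
qed

(* Normalising by
   L = l s0, X = l s / L approximates r to order t (as l is affine and l = O(t L) on T), while
   \<surd>X = |(g_i s)_i| / \<surd>L approximates |r| to order \<surd>t (as the g_i are affine and
   |(g_i f)_i| = O(\<surd>(t L)) on T). *)
lemma certificate_approximates_coefficient:
  fixes T :: "(real^'n::finite) set" and s0 s q :: "real^'n"
  assumes T: "finite T" "T \<noteq> {}" "s0 \<notin> T"
    and \<mu>: "sum \<mu> (insert s0 T) = 1" "(\<Sum>v\<in>insert s0 T. \<mu> v *\<^sub>R v) = s"
    and q: "q = (\<Sum>f\<in>T. (1 / real (card T)) *\<^sub>R f)" and t: "0 < t"
    and l: "affine_fun l" and gs: "\<forall>g\<in>set gs. affine_fun g"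
    and sos: "\<forall>v\<in>insert s (insert s0 T). l v = (\<Sum>g\<leftarrow>gs. (g v)^2)"
    and neg: "l ((1+t) *\<^sub>R q - t *\<^sub>R s0) < 0"
  defines "m \<equiv> real (card T)" and "M \<equiv> (\<Sum>f\<in>T. \<bar>\<mu> f\<bar>)"
  shows "\<exists>X\<ge>0. \<bar>X - \<mu> s0\<bar> \<le> M * m * t \<and> \<bar>sqrt X - \<bar>\<mu> s0\<bar>\<bar> \<le> M * sqrt m * sqrt t"
proof -
  define r where "r = \<mu> s0"
  define N where "N v = L2_set (\<lambda>i. (gs ! i) v) {..<length gs}" for v
  have N: "N v = sqrt (l v)" and l_nonneg: "0 \<le> l v" if "v \<in> insert s (insert s0 T)" for v
  proof -
    have "l v = (\<Sum>i<length gs. ((gs ! i) v)^2)"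
      using sos[rule_format, OF that] by (simp add: sum_list_sum_nth atLeast0LessThan)
    then show "N v = sqrt (l v)" "0 \<le> l v" by (simp_all add: N_def L2_set_def sum_nonneg)
  qed
  define L where "L = l s0"
  have L0: "0 < L" and small: "\<forall>f\<in>T. l f \<le> m * t * L"
    using affine_negative_beyond_centroid[OF l T(1,2) _ q t neg] l_nonneg
    by (simp_all add: L_def m_def)
  have "\<bar>l s - r * L\<bar> = \<bar>\<Sum>f\<in>T. \<mu> f * l f\<bar>"
    using affine_fun_affine_comb[OF l finite.insertI[OF T(1)] \<mu>(1)] \<mu>(2) T
    by (simp add: r_def L_def)
  also have "\<dots> \<le> (\<Sum>f\<in>T. \<bar>\<mu> f\<bar> * (m * t * L))"
    using small l_nonneg by (intro order.trans[OF sum_abs] sum_mono)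
      (auto simp: abs_mult intro!: mult_left_mono)
  also have "\<dots> = M * (m * t * L)" unfolding M_def by (rule sum_distrib_right[symmetric])
  finally have value_est: "\<bar>l s - r * L\<bar> \<le> M * (m * t * L)" .
  have "\<bar>N s - \<bar>r\<bar> * N s0\<bar> \<le> (\<Sum>f\<in>T. \<bar>\<mu> f\<bar> * N f)"
    unfolding N_def r_def using gs T(1,3) \<mu>
    by (intro L2_set_affine_comb_estimate) auto
  also have "\<dots> \<le> (\<Sum>f\<in>T. \<bar>\<mu> f\<bar> * sqrt (m * t * L))"
    using small N by (intro sum_mono mult_left_mono) auto
  also have "\<dots> = M * sqrt (m * t * L)" unfolding M_def by (rule sum_distrib_right[symmetric])
  finally have "\<bar>N s - \<bar>r\<bar> * N s0\<bar> \<le> M * sqrt (m * t * L)" .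
  then have norm_est: "\<bar>N s - \<bar>r\<bar> * sqrt L\<bar> \<le> M * sqrt m * sqrt t * sqrt L"
    using N[of s0] by (simp add: L_def real_sqrt_mult mult.assoc)
  define X where "X = l s / L"
  have "X \<ge> 0" unfolding X_def using l_nonneg L0 by simp
  moreover have "\<bar>X - r\<bar> \<le> M * m * t"
    using value_est L0 by (simp add: X_def field_simps abs_div divide_le_eq)
  moreover have "\<bar>sqrt X - \<bar>r\<bar>\<bar> \<le> M * sqrt m * sqrt t"
  proof -
    have sL: "sqrt L > 0" using L0 by simp
    have "sqrt X = N s / sqrt L" unfolding X_def using N by (simp add: real_sqrt_divide)
    then have "sqrt X - \<bar>r\<bar> = (N s - \<bar>r\<bar> * sqrt L) / sqrt L"
      using sL by (simp add: field_simps)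
    then have "\<bar>sqrt X - \<bar>r\<bar>\<bar> = \<bar>N s - \<bar>r\<bar> * sqrt L\<bar> / sqrt L"
      using sL by (simp add: abs_div)
    also have "\<dots> \<le> M * sqrt m * sqrt t" using norm_est sL by (simp add: divide_le_eq)
    finally show ?thesis .
  qed
  ultimately show ?thesis unfolding r_def by blast
qed

lemma affine_coefficient_idempotent:
  fixes T :: "(real^'n::finite) set" and s0 s q :: "real^'n"
  assumes T: "finite T" "T \<noteq> {}" "s0 \<notin> T"
    and \<mu>: "sum \<mu> (insert s0 T) = 1" "(\<Sum>v\<in>insert s0 T. \<mu> v *\<^sub>R v) = s"
    and q: "q = (\<Sum>f\<in>T. (1 / real (card T)) *\<^sub>R f)"
    and certificates: "\<forall>t. 0 < t \<and> t \<le> 1 \<longrightarrow> (\<exists>l gs. affine_fun l \<and> (\<forall>g\<in>set gs. affine_fun g) \<and>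
            (\<forall>v\<in>insert s (insert s0 T). l v = (\<Sum>g\<leftarrow>gs. (g v)^2)) \<and>
            l ((1+t) *\<^sub>R q - t *\<^sub>R s0) < 0)"
  shows "\<mu> s0 * \<mu> s0 = \<mu> s0"
proof (rule idempotent_if_approximated)
  define m where "m = real (card T)"
  define M where "M = (\<Sum>f\<in>T. \<bar>\<mu> f\<bar>)"
  show "0 \<le> M * m" "0 \<le> M * sqrt m" by (simp_all add: m_def M_def sum_nonneg)
  show "\<forall>t. 0 < t \<and> t \<le> 1 \<longrightarrow> (\<exists>X\<ge>0. \<bar>X - \<mu> s0\<bar> \<le> M * m * t \<and>
                                   \<bar>sqrt X - \<bar>\<mu> s0\<bar>\<bar> \<le> M * sqrt m * sqrt t)"
  proof (intro allI impI)
    fix t :: real assume t: "0 < t \<and> t \<le> 1"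
    then obtain l gs where "affine_fun l" "\<forall>g\<in>set gs. affine_fun g"
      "\<forall>v\<in>insert s (insert s0 T). l v = (\<Sum>g\<leftarrow>gs. (g v)^2)" "l ((1+t) *\<^sub>R q - t *\<^sub>R s0) < 0"
      using certificates by blast
    from certificate_approximates_coefficient[OF T \<mu> q _ this] t
    show "\<exists>X\<ge>0. \<bar>X - \<mu> s0\<bar> \<le> M * m * t \<and> \<bar>sqrt X - \<bar>\<mu> s0\<bar>\<bar> \<le> M * sqrt m * sqrt t"
      unfolding m_def M_def by blast
  qed
qed

lemma certificate_outside_theta_body:
  fixes S :: "(real^'n::finite) set"
  assumes "p \<notin> theta_body 1 (vanishing_ideal S)"
  shows "\<exists>l gs. affine_fun l \<and> (\<forall>g\<in>set gs. affine_fun g) \<and>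
           (\<forall>v\<in>S. l v = (\<Sum>g\<leftarrow>gs. (g v)^2)) \<and> l p < 0"
proof -
  obtain l where l: "poly_deg_le 1 l" "k_sos_mod 1 (vanishing_ideal S) l" "l p < 0"
    using assms unfolding theta_body_def by force
  then obtain gs where gs: "\<forall>g\<in>set gs. poly_deg_le 1 g"
    and "(\<lambda>x. l x - (\<Sum>g\<leftarrow>gs. (g x)^2)) \<in> vanishing_ideal S"
    unfolding k_sos_mod_def by blast
  then have "\<forall>v\<in>S. l v = (\<Sum>g\<leftarrow>gs. (g v)^2)" unfolding vanishing_ideal_def by auto
  with l gs show ?thesis using poly_deg_le_1_imp_affine_fun by blast
qed

(* Given a facet F = conv T of conv S, some point of S lies strictly inside the facet
   halfspace, and together with T it affinely spans aff S (as dim F = dim S - 1). *)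
lemma facet_opposite_point:
  fixes S :: "(real^'n::finite) set"
  assumes F: "F facet_of convex hull S" "F = convex hull S \<inter> {x. a \<bullet> x = b}"
    and valid: "convex hull S \<subseteq> {x. a \<bullet> x \<le> b}"
    and T: "T \<subseteq> S" "F = convex hull T"
  shows "\<exists>s0\<in>S. a \<bullet> s0 < b \<and> affine hull (insert s0 T) = affine hull S"
proof -
  obtain s0 where s0: "s0 \<in> S" "s0 \<notin> F"
  proof (rule ccontr)
    assume "\<not> thesis"
    with that have "S \<subseteq> F" by blast
    moreover have "convex F" using facet_of_imp_face_of[OF F(1)] by (rule face_of_imp_convex)
    ultimately have "convex hull S \<subseteq> F" by (rule hull_minimal)
    then have "F = convex hull S" using F(2) by blast
    with F(1) show False by simp
  qed
  have "s0 \<in> convex hull S" using s0(1) by (rule hull_inc)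
  with s0(2) F(2) valid have below: "a \<bullet> s0 < b" by force
  have "affine hull T \<subseteq> {x. a \<bullet> x = b}"
    by (rule hull_minimal) (use F(2) T(2) hull_subset[of T convex] in \<open>auto simp: affine_hyperplane\<close>)
  with below have "s0 \<notin> affine hull T" by force
  then have "aff_dim (insert s0 T) = aff_dim T + 1" by (simp add: aff_dim_insert)
  also have "aff_dim T = aff_dim (convex hull S) - 1"
    using F(1) T(2) by (simp add: facet_of_def aff_dim_convex_hull)
  finally have "aff_dim (insert s0 T) = aff_dim S" by (simp add: aff_dim_convex_hull)
  moreover have "insert s0 T \<subseteq> S" using s0(1) T(1) by blast
  ultimately show ?thesis using below s0(1) aff_dim_eq_full_gen by blast
qed

lemma translate_by_difference_subset:
  assumes "affine A" "B \<subseteq> A" "x \<in> A" "y \<in> A"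
  shows "(\<lambda>z. (x - y) + z) ` B \<subseteq> A"
proof
  fix w assume "w \<in> (\<lambda>z. (x - y) + z) ` B"
  then obtain z where z: "z \<in> A" "w = (x - y) + z" using assms(2) by blast
  have "z + 1 *\<^sub>R (x - y) \<in> A" by (rule mem_affine_3_minus[OF assms(1) z(1) assms(3,4)])
  then show "w \<in> A" using z(2) by (simp add: add.commute)
qed

lemma affine_coefficient_zero_one_cases:
  assumes T: "finite T" "s0 \<notin> T" "f0 \<in> T" "T \<subseteq> F"
    and F: "F = K \<inter> {x. a \<bullet> x = b}" and s: "s \<in> K"
    and \<mu>: "sum \<mu> (insert s0 T) = 1" "(\<Sum>v\<in>insert s0 T. \<mu> v *\<^sub>R v) = s"
    and zero_one: "\<mu> s0 = 0 \<or> \<mu> s0 = 1"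
  shows "s \<in> F \<union> (\<lambda>x. (s0 - f0) + x) ` (affine hull T)"
  using zero_one
proof
  assume r0: "\<mu> s0 = 0"
  have "a \<bullet> s = (\<Sum>v\<in>insert s0 T. \<mu> v * (a \<bullet> v))"
    unfolding \<mu>(2)[symmetric] by (simp add: inner_sum_right)
  also have "\<dots> = (\<Sum>f\<in>T. \<mu> f * b)" using T F r0 by (auto intro: sum.cong)
  also have "\<dots> = b" using \<mu>(1) T r0 by (simp flip: sum_distrib_right)
  finally show ?thesis using s F by blast
next
  assume r1: "\<mu> s0 = 1"
  define u where "u f = \<mu> f + (if f = f0 then 1 else 0)" for f
  have "sum u T = 1" unfolding u_def using \<mu>(1) T r1 by (simp add: sum.distrib)
  moreover have "(\<Sum>f\<in>T. u f *\<^sub>R f) = f0 + (\<Sum>f\<in>T. \<mu> f *\<^sub>R f)"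
    using T by (simp add: u_def scaleR_add_left sum.distrib if_distrib[of "\<lambda>c. c *\<^sub>R _"]
                  add.commute cong: if_cong)
  ultimately have "f0 + (\<Sum>f\<in>T. \<mu> f *\<^sub>R f) \<in> affine hull T"
    unfolding affine_hull_finite[OF T(1)] by blast
  moreover have "s = (s0 - f0) + (f0 + (\<Sum>f\<in>T. \<mu> f *\<^sub>R f))" using \<mu>(2) T r1 by simp
  ultimately show ?thesis by blast
qed

(* With q the centroid of T, the points
   (1+t) q - t s0 (t > 0) violate the inequality, so they carry certificates, and the key
   estimate shows that every s \<in> S has coefficient 0 or 1 at s0. *)
lemma theta_exact_coefficient_zero_one:
  fixes S :: "(real^'n::finite) set"
  assumes exact: "theta_body 1 (vanishing_ideal S) \<subseteq> convex hull S"
    and valid: "convex hull S \<subseteq> {x. a \<bullet> x \<le> b}" and hyp: "affine hull T \<subseteq> {x. a \<bullet> x = b}"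
    and T: "T \<subseteq> S" "finite T" "T \<noteq> {}" and s0: "s0 \<in> S" "a \<bullet> s0 < b" and s: "s \<in> S"
    and \<mu>: "sum \<mu> (insert s0 T) = 1" "(\<Sum>v\<in>insert s0 T. \<mu> v *\<^sub>R v) = s"
  shows "\<mu> s0 = 0 \<or> \<mu> s0 = 1"
proof -
  have s0T: "s0 \<notin> T" using s0(2) hyp hull_inc[of s0 T] by force
  define q where "q = (\<Sum>f\<in>T. (1 / real (card T)) *\<^sub>R f)"
  have "q \<in> affine hull T"
    unfolding affine_hull_finite[OF T(2)] q_def using T(2,3)
    by (intro CollectI exI[of _ "\<lambda>_. 1 / real (card T)"]) (simp add: card_gt_0_iff)
  with hyp have aq: "a \<bullet> q = b" by blast
  have "\<exists>l gs. affine_fun l \<and> (\<forall>g\<in>set gs. affine_fun g) \<and>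
          (\<forall>v\<in>insert s (insert s0 T). l v = (\<Sum>g\<leftarrow>gs. (g v)^2)) \<and>
          l ((1+t) *\<^sub>R q - t *\<^sub>R s0) < 0" if t: "0 < t" for t
  proof -
    have "a \<bullet> ((1+t) *\<^sub>R q - t *\<^sub>R s0) = b + t * (b - a \<bullet> s0)"
      using aq by (simp add: inner_diff_right algebra_simps)
    moreover have "0 < t * (b - a \<bullet> s0)" using t s0(2) by simp
    ultimately have "(1+t) *\<^sub>R q - t *\<^sub>R s0 \<notin> {x. a \<bullet> x \<le> b}" by simp
    then have "(1+t) *\<^sub>R q - t *\<^sub>R s0 \<notin> theta_body 1 (vanishing_ideal S)" using exact valid by blast
    then obtain l gs where "affine_fun l" "\<forall>g\<in>set gs. affine_fun g"
      "\<forall>v\<in>S. l v = (\<Sum>g\<leftarrow>gs. (g v)^2)" "l ((1+t) *\<^sub>R q - t *\<^sub>R s0) < 0"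
      using certificate_outside_theta_body by blast
    moreover have "insert s (insert s0 T) \<subseteq> S" using s s0(1) T(1) by blast
    ultimately show ?thesis by blast
  qed
  then have "\<mu> s0 * \<mu> s0 = \<mu> s0"
    by (intro affine_coefficient_idempotent[OF T(2,3) s0T \<mu> q_def]) auto
  then show ?thesis by (metis mult_cancel_right1 mult_zero_left)
qed

(* If TH_1(I(S)) \<subseteq> conv S, every facet F = conv T = conv S \<inter> {a\<bullet>x = b} is two-level: pick
   s0 \<in> S off F, write each s \<in> S in affine coordinates on T \<union> {s0}; the coefficient at s0 is
   0 or 1, so s lies on F or on the translate of aff F by s0 - f0 (any f0 \<in> T). *)
lemma theta_exact_imp_two_level:
  fixes S :: "(real^'n::finite) set"
  assumes fin: "finite S" and exact: "theta_body 1 (vanishing_ideal S) \<subseteq> convex hull S"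
    and F: "F facet_of convex hull S"
  shows "\<exists>H. (\<exists>v. H = (\<lambda>x. v + x) ` (affine hull F)) \<and> H \<subseteq> affine hull S \<and> S \<subseteq> F \<union> H"
proof -
  obtain a b where valid: "convex hull S \<subseteq> {x. a \<bullet> x \<le> b}"
    and F_eq: "F = convex hull S \<inter> {x. a \<bullet> x = b}"
    using facet_of_polyhedron[OF polyhedron_convex_hull[OF fin] F] by metis
  obtain T where T: "T \<subseteq> S" "F = convex hull T"
    using face_of_convex_hull_subset[OF finite_imp_compact[OF fin] facet_of_imp_face_of[OF F]]
    by blast
  have finT: "finite T" using T(1) fin by (rule finite_subset)
  have "T \<noteq> {}" using F T(2) by (auto simp: facet_of_def)
  then obtain f0 where f0: "f0 \<in> T" by blast
  have TF: "T \<subseteq> F" unfolding T(2) by (rule hull_subset)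
  have hyp: "affine hull T \<subseteq> {x. a \<bullet> x = b}"
    by (rule hull_minimal) (use TF F_eq in \<open>auto simp: affine_hyperplane\<close>)
  obtain s0 where s0: "s0 \<in> S" "a \<bullet> s0 < b" and span: "affine hull (insert s0 T) = affine hull S"
    using facet_opposite_point[OF F F_eq valid T] by blast
  have s0T: "s0 \<notin> T" using s0(2) hyp hull_inc[of s0 T] by force
  define H where "H = (\<lambda>x. (s0 - f0) + x) ` (affine hull F)"
  have affF: "affine hull F = affine hull T" unfolding T(2) by simp
  have "H \<subseteq> affine hull S" unfolding H_def affF
    by (rule translate_by_difference_subset[OF affine_affine_hull hull_mono[OF T(1)]
          hull_inc[OF s0(1)] hull_inc[OF subsetD[OF T(1) f0]]])
  moreover have "S \<subseteq> F \<union> H"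
  proof
    fix s assume s: "s \<in> S"
    then have "s \<in> affine hull (insert s0 T)" unfolding span by (rule hull_inc)
    then obtain \<mu> where \<mu>: "sum \<mu> (insert s0 T) = 1" "(\<Sum>v\<in>insert s0 T. \<mu> v *\<^sub>R v) = s"
      unfolding affine_hull_finite[OF finite.insertI[OF finT]] by blast
    have "s \<in> convex hull S" using s by (rule hull_inc)
    from affine_coefficient_zero_one_cases[OF finT s0T f0 TF F_eq this \<mu>
        theta_exact_coefficient_zero_one[OF exact valid hyp T(1) finT \<open>T \<noteq> {}\<close> s0 s \<mu>]]
    show "s \<in> F \<union> H" unfolding H_def affF .
  qed
  ultimately show ?thesis unfolding H_def by blast
qed

theorem mainTheorem15:
  fixes S :: "(real^'n) set"
  assumes "finite S"
  shows "TH_exact 1 (vanishing_ideal S) \<longleftrightarrow>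
    (\<forall>F. F facet_of (convex hull S) \<longrightarrow>
       (\<exists>H. (\<exists>v. H = (\<lambda>x. v + x) ` (affine hull F)) \<and> H \<subseteq> affine hull S \<and>
            S \<subseteq> F \<union> H))"
  unfolding TH_exact_iff_subset[OF assms]
proof
  assume "theta_body 1 (vanishing_ideal S) \<subseteq> convex hull S"
  then show "\<forall>F. F facet_of (convex hull S) \<longrightarrow>
       (\<exists>H. (\<exists>v. H = (\<lambda>x. v + x) ` (affine hull F)) \<and> H \<subseteq> affine hull S \<and> S \<subseteq> F \<union> H)"
    using theta_exact_imp_two_level[OF assms] by blast
qed (rule two_level_imp_theta_body_subset[OF assms])

end
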